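(* Let $c$ be a correct client following the client protocol described in the context, and let $o$ and $o'$ be two operations (each a \textsc{get} or a \textsc{put}) issued by $c$, with $o$ issued before $o'$. Then $\mathrm{ts}(o') \ge \mathrm{ts}(o)$.
   Context: Client model. A client $c$ has a physical clock whose reading $\mathsf{clock}_c$ is a positive real number that is strictly increasing in real time. The client keeps two variables, a dependency time $\mathsf{dt}_c$ and a common global stable time $\mathsf{cgst}_c$, both initially $0$; they are modified only as described below. A correct client issues its operations one at a time: an operation is issued only after the previous one has returned. Servers are grouped into partitions of $3f+1$ replicas each, and a quorum is a set of $2f+1$ replicas of one partition. \textsc{get}$(k)$: the client sets $ts \gets \max\{\mathsf{dt}_c, \mathsf{cgst}_c\}$ and sends a request carrying $ts$ to the replicas of the partition holding $k$. It then waits for replies from a quorum $Q$, each reply from replica $i\in Q$ carrying a value $v_i$ and a number $cgst_i$, sets $\mathsf{cgst}_c \gets \max\{\mathsf{cgst}_c, \min_{i\in Q} cgst_i\}$, and returns a value. \textsc{put}$(k,v)$: the client waits until $\mathsf{clock}_c > \mathsf{cgst}_c$, then sends a request carrying $(k, v, cl, c)$, where $cl$ is the current reading of $\mathsf{clock}_c$, to the replicas of the partition holding $k$. It then waits for replies from a quorum $Q$, each reply from $i\in Q$ carrying a number $cgst_i$, sets $\mathsf{cgst}_c \gets \max\{\mathsf{cgst}_c, \min_{i\in Q} cgst_i\}$, then sets $\mathsf{dt}_c$ to the current reading of $\mathsf{clock}_c$, and returns. Timestamps: for a \textsc{get} operation $o$, $\mathrm{ts}(o)$ is the value $ts=\max\{\mathsf{dt}_c,\mathsf{cgst}_c\}$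 computed when $o$ is issued; for a \textsc{put} operation $o$, $\mathrm{ts}(o)$ is the clock value $cl$ sent in its request. *)

theory Defs
  imports Complex_Main
begin

datatype opkind = GET | PUT

text \<open>A run of a correct client c issuing n operations 0,1,...,n-1 one at a time.
  clock t : reading of the physical clock of c at real time t (positive, strictly increasing);
  kind i : whether operation i is a GET or a PUT;
  s i : real time at which operation i is issued (its request is sent; for a PUT this is
        after the waiting phase, so cl = clock (s i));
  r i : real time at which operation i returns (for a PUT, dt is set to clock (r i));
  Q i : the quorum of replicas (indices of the 3f+1 replicas of the partition) whose replies
        are used, rep i q the cgst number carried by the reply of replica q to operation i;
  dt i, cg i : values of dt_c and cgst_c just before operation i is issued;
  ts i : timestamp of operation i.\<close>

definition client_run ::
  "(real \<Rightarrow> real) \<Rightarrow> nat \<Rightarrow> nat \<Rightarrow> (nat \<Rightarrow> opkind) \<Rightarrow> (nat \<Rightarrow> real) \<Rightarrow> (nat \<Rightarrow> real)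
   \<Rightarrow> (nat \<Rightarrow> nat set) \<Rightarrow> (nat \<Rightarrow> nat \<Rightarrow> real)
   \<Rightarrow> (nat \<Rightarrow> real) \<Rightarrow> (nat \<Rightarrow> real) \<Rightarrow> (nat \<Rightarrow> real) \<Rightarrow> bool" where
  "client_run clock f n kind s r Q rep dt cg ts \<longleftrightarrow>
     strict_mono clock \<and> (\<forall>t. 0 < clock t) \<and>
     dt 0 = 0 \<and> cg 0 = 0 \<and>
     (\<forall>i<n. s i \<le> r i) \<and>
     (\<forall>i. Suc i < n \<longrightarrow> r i \<le> s (Suc i)) \<and>
     (\<forall>i<n. Q i \<subseteq> {..<3*f+1} \<and> card (Q i) = 2*f+1) \<and>
     (\<forall>i<n. kind i = GET \<longrightarrow>
         ts i = max (dt i) (cg i) \<and>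
         cg (Suc i) = max (cg i) (Min (rep i ` Q i)) \<and>
         dt (Suc i) = dt i) \<and>
     (\<forall>i<n. kind i = PUT \<longrightarrow>
         cg i < clock (s i) \<and>
         ts i = clock (s i) \<and>
         cg (Suc i) = max (cg i) (Min (rep i ` Q i)) \<and>
         dt (Suc i) = clock (r i))"

end

theory Submission
  imports Defs
begin

text \<open>The quantity \<open>max dt\<^sub>c cgst\<^sub>c\<close> separates consecutive timestamps: just before an
  operation is issued it is at most the operation's timestamp, and just after the operation it is
  at least that timestamp. For a PUT, \<open>cgst\<^sub>c < cl\<close> by the
  waiting rule and \<open>dt\<^sub>c \<le> cl\<close> because \<open>dt\<^sub>c\<close> was last set to the clock at an earlier return;
  afterwards \<open>dt\<^sub>c\<close> is the clock at the return, which is at least \<open>cl\<close>. Timestamps and this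
  quantity therefore interleave into one non-decreasing chain.\<close>

lemma interleaved_chain_mono:
  fixes lo x :: "nat \<Rightarrow> 'a::preorder"
  assumes lo_le: "\<And>k. k < n \<Longrightarrow> lo k \<le> x k"
    and le_lo_Suc: "\<And>k. k < n \<Longrightarrow> x k \<le> lo (Suc k)"
    and "i < j" and "j < n"
  shows "x i \<le> x j"
  using assms(3,4)
proof (induction j)
  case 0
  then show ?case by simp
next
  case (Suc m)
  have "x i \<le> x m"
    using Suc by (cases "i = m") auto
  also have "\<dots> \<le> lo (Suc m)"
    using le_lo_Suc Suc.prems by simp
  also have "\<dots> \<le> x (Suc m)"
    using lo_le Suc.prems by simp
  finally show ?case .
qed

lemma client_run_clock_mono:
  assumes "client_run clock f n kind s r Q rep dt cg ts" and "a \<le> b"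
  shows "clock a \<le> clock b"
  using assms strict_mono_leD unfolding client_run_def by blast

lemma client_run_cg_le_Suc:
  assumes "client_run clock f n kind s r Q rep dt cg ts" and "k < n"
  shows "cg k \<le> cg (Suc k)"
  using assms unfolding client_run_def by (cases "kind k") auto

lemma client_run_dt_le_clock_issue:
  assumes run: "client_run clock f n kind s r Q rep dt cg ts" and "k < n"
  shows "dt k \<le> clock (s k)"
  using \<open>k < n\<close>
proof (induction k)
  case 0
  then show ?case
    using run unfolding client_run_def by (metis less_eq_real_def)
next
  case (Suc k)
  have "s k \<le> r k" "r k \<le> s (Suc k)"
    using run Suc.prems unfolding client_run_def by auto
  then have "clock (s k) \<le> clock (s (Suc k))" "clock (r k) \<le> clock (s (Suc k))"
    using client_run_clock_mono[OF run] by auto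
  with Suc run show ?case
    unfolding client_run_def by (cases "kind k") auto
qed

lemma client_run_max_le_ts:
  assumes run: "client_run clock f n kind s r Q rep dt cg ts" and "k < n"
  shows "max (dt k) (cg k) \<le> ts k"
  using run assms(2) client_run_dt_le_clock_issue[OF run assms(2)]
  unfolding client_run_def by (cases "kind k") auto

lemma client_run_ts_le_max_Suc:
  assumes run: "client_run clock f n kind s r Q rep dt cg ts" and "k < n"
  shows "ts k \<le> max (dt (Suc k)) (cg (Suc k))"
proof -
  have "s k \<le> r k"
    using run assms(2) unfolding client_run_def by auto
  then have "clock (s k) \<le> clock (r k)"
    by (rule client_run_clock_mono[OF run])
  with run assms(2) client_run_dt_le_clock_issue[OF run assms(2)]
    client_run_cg_le_Suc[OF run assms(2)]
  show ?thesis
    unfolding client_run_def by (cases "kind k") auto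
qed

theorem lemma7:
  assumes "client_run clock f n kind s r Q rep dt cg ts"
    and "i < j" and "j < n"
  shows "ts i \<le> ts j"
  using interleaved_chain_mono[of n "\<lambda>k. max (dt k) (cg k)" ts]
    client_run_max_le_ts[OF assms(1)] client_run_ts_le_max_Suc[OF assms(1)] assms(2,3)
  by blast

end
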